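(* There exist neuronal networks $\mathcal N$ all of whose neurons satisfy Dale's Principle (each neuron is excitatory or inhibitory) but which are not a dynamical optimum conditioned to their synaptical equivalence class, i.e. there is a network $\mathcal N'$ synaptically equivalent to $\mathcal N$ with $\mathcal N'\not\sqsubseteq\mathcal N$.
   Context: A neuronal network $\mathcal N$ consists of $N\ge2$ neurons $i$. Neuron $i$ has a state $x_i=(x_{i,1},\dots,x_{i,k_i})$ in a compact manifold $M_i$ of finite dimension $k_i\ge1$, $x_{i,1}$ being its membrane potential; it has a threshold $\theta_i>0$ and a Lipschitz vector field $f_i$, and isolated it evolves by $dx_i/dt=F_i(x_i):=f_i(x_i)-\vec\theta_i\delta_{\theta_i}(x_{i,1})$, i.e. $\dot x_i=f_i(x_i)$ while $x_{i,1}<\theta_i$, and $x_{i,1}$ is reset to $0$ when it reaches $\theta_i$ (spike). For $i\neq j$ the synaptic action $\Delta_{i,j}$ is a real function of $x_j$, identically $0$ or of constant sign; when $i$ spikes, $x_{j,1}$ jumps by $\Delta_{i,j}$. The network evolves by $dx_j/dt=F_j(x_j)+\sum_{i\ne j}\vec\Delta_{i,j}\delta_{\theta_i}(x_{i,1})$ with the refractory/avalanche rule (a neuron pushed to its threshold by simultaneous actions spikes at that instant; each neuron spikes at most once per instant and ignores actions arriving at the instant it spikes). For every $X_0\in M:=M_1\times\cdots\times M_N$ the solution is assumed to exist and be unique, defining the dynamics $\Phi(X_0,t)$, $t\ge0$. No neuron is indifferent: for each $i$ some $\Delta_{i,j}\not\equiv0$. A neuron $i$ is excitatory (resp. inhibitory)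 if $\Delta_{i,j}>0$ (resp. $\Delta_{i,j}<0$) for every $j$ with $\Delta_{i,j}\not\equiv0$; it is mixed if it is neither. Dale's Principle: no neuron is mixed. Two neurons $i\ne j$ are structurally identical if $F_i=F_j$, $\Delta_{i,j}\equiv\Delta_{j,i}\equiv0$ and $\Delta_{h,i}=\Delta_{h,j}$ for all $h\ne i,j$. A homogeneous part is a maximal set of pairwise structurally identical neurons. A synaptical unit is a block of a partition of a homogeneous part $A$ into a minimal number of sets $U$ such that for each neuron $h\notin A$ at most one $i\in U$ has $\Delta_{i,h}\not\equiv0$. For a unit $U$ and homogeneous part $B$, $\Delta_{U,B}$ denotes $0$ if $\Delta_{i,h}\equiv0$ for all $i\in U,h\in B$, and otherwise the common value $\Delta_{i,h}$ ($h\in B$) for the unique $i\in U$ sending nonzero actions to $B$. Networks $\mathcal N,\mathcal N'$ are synaptically equivalent if they have the same number of homogeneous parts and the same number of synaptical units, and there is a bijection $\varphi$ from the units of $\mathcal N$ onto the units of $\mathcal N'$ mapping the units of each homogeneous part $B$ onto all units of a homogeneous part $\varphi(B)$ of $\mathcal N'$, such that $\Delta_{U,B}=\Delta_{\varphi(U),\varphi(B)}$ for all units $U$ and parts $B$, and $F_i=F_{i'}$ for all $i\in U$, $i'\in\varphi(U)$. $\mathcal N'\sqsubseteq\mathcal N$ means: there is a continuous injective $\psi:M'\to M$ with $\psi(\Phi'(X'_0,t))=\Phi(\psi(X'_0),t)$ for all $X'_0\in M'$, $t\ge0$, where $\Phi,\Phi'$ are the dynamics of $\mathcal N,\mathcal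 N'$ on $M,M'$. A network $\mathcal N$ is a dynamical optimum conditioned to its synaptical equivalence class $\mathcal C$ if $\mathcal N'\sqsubseteq\mathcal N$ for all $\mathcal N'\in\mathcal C$. *)

theory Defs
  imports "HOL-Analysis.Analysis"
begin

text \<open>
Neurons are indexed 0..<nn N.  The state of a neuron with
dimension k is an element of nat => real vanishing outside {0..<k}
(a vector of R^k); coordinate 0 is the membrane potential.  A network state
is a function nat => (nat => real) vanishing for neurons >= nn N.
Topologies are the product topologies (for these extensional functions this
is the Euclidean topology of the finite product).
\<close>

record network =
  nn  :: nat
  dim :: "nat \<Rightarrow> nat"
  sp  :: "nat \<Rightarrow> (nat \<Rightarrow> real) set"
  thr :: "nat \<Rightarrow> real"
  fld :: "nat \<Rightarrow> (nat \<Rightarrow> real) \<Rightarrow> (nat \<Rightarrow> real)"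
  syn :: "nat \<Rightarrow> nat \<Rightarrow> (nat \<Rightarrow> real) \<Rightarrow> real"        \<comment> \<open>Delta_{i,j} as function of x_j\<close>

definition Rk :: "nat \<Rightarrow> (nat \<Rightarrow> real) set" where
  "Rk k = {y. \<forall>c\<ge>k. y c = 0}"

definition halfspace :: "nat \<Rightarrow> (nat \<Rightarrow> real) set" where
  "halfspace k = {y \<in> Rk k. y 0 \<ge> 0}"

definition is_manifold :: "nat \<Rightarrow> (nat \<Rightarrow> real) set \<Rightarrow> bool" where
  "is_manifold k M \<longleftrightarrow> M \<subseteq> Rk k \<and>
     (\<forall>x\<in>M. \<exists>U V. openin (top_of_set M) U \<and> x \<in> U \<and>
        openin (top_of_set (halfspace k)) V \<and> U homeomorphic V)"

definition edist :: "nat \<Rightarrow> (nat \<Rightarrow> real) \<Rightarrow> (nat \<Rightarrow> real) \<Rightarrow> real" where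
  "edist k x y = sqrt (\<Sum>c<k. (x c - y c)^2)"

definition lipschitz_field :: "nat \<Rightarrow> (nat \<Rightarrow> real) set \<Rightarrow> ((nat \<Rightarrow> real) \<Rightarrow> (nat \<Rightarrow> real)) \<Rightarrow> bool" where
  "lipschitz_field k M f \<longleftrightarrow> (\<exists>L. \<forall>x\<in>M. \<forall>y\<in>M. edist k (f x) (f y) \<le> L * edist k x y)"

definition nz :: "network \<Rightarrow> nat \<Rightarrow> nat \<Rightarrow> bool" where
  "nz N i j \<longleftrightarrow> (\<exists>x\<in>sp N j. syn N i j x \<noteq> 0)"

definition neurons :: "network \<Rightarrow> nat set" where
  "neurons N = {..<nn N}"

definition Mtot :: "network \<Rightarrow> (nat \<Rightarrow> nat \<Rightarrow> real) set" where
  "Mtot N = {X. (\<forall>i<nn N. X i \<in> sp N i) \<and> (\<forall>i\<ge>nn N. X i = (\<lambda>_. 0))}"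

definition aval_step :: "network \<Rightarrow> (nat \<Rightarrow> nat \<Rightarrow> real) \<Rightarrow> nat set \<Rightarrow> nat set" where
  "aval_step N Y J = J \<union> {j. j < nn N \<and> Y j 0 + (\<Sum>i\<in>J - {j}. syn N i j (Y j)) \<ge> thr N j}"

definition spikers :: "network \<Rightarrow> (nat \<Rightarrow> nat \<Rightarrow> real) \<Rightarrow> nat set" where
  "spikers N Y = (\<Union>n. (aval_step N Y ^^ n) {})"

definition jump :: "network \<Rightarrow> (nat \<Rightarrow> nat \<Rightarrow> real) \<Rightarrow> (nat \<Rightarrow> nat \<Rightarrow> real)" where
  "jump N Y = (\<lambda>j. if j < nn N then
       (if j \<in> spikers N Y then (Y j)(0 := 0)
        else (Y j)(0 := Y j 0 + (\<Sum>i\<in>spikers N Y. syn N i j (Y j))))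
     else Y j)"

definition solution :: "network \<Rightarrow> (nat \<Rightarrow> nat \<Rightarrow> real) \<Rightarrow> (real \<Rightarrow> nat \<Rightarrow> nat \<Rightarrow> real) \<Rightarrow> bool" where
  "solution N X0 X \<longleftrightarrow>
     (\<forall>t\<ge>0. X t \<in> Mtot N) \<and>
     X 0 = jump N X0 \<and>
     (\<forall>t>0. \<exists>Y. (X \<longlongrightarrow> Y) (at_left t) \<and> X t = jump N Y) \<and>
     (\<forall>t\<ge>0. \<forall>i<nn N. \<forall>c<dim N i.
        ((\<lambda>s. X s i c) has_real_derivative fld N i (X t i) c) (at t within {t..}))"

definition dyn :: "network \<Rightarrow> (nat \<Rightarrow> nat \<Rightarrow> real) \<Rightarrow> real \<Rightarrow> (nat \<Rightarrow> nat \<Rightarrow> real)" where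
  "dyn N X0 = (THE Z. \<exists>X. solution N X0 X \<and> Z = (\<lambda>t. if t \<ge> 0 then X t else undefined))"

definition admissible :: "network \<Rightarrow> bool" where
  "admissible N \<longleftrightarrow>
     nn N \<ge> 2 \<and>
     (\<forall>i<nn N. dim N i \<ge> 1 \<and> sp N i \<noteq> {} \<and> compact (sp N i) \<and>
        is_manifold (dim N i) (sp N i) \<and> thr N i > 0 \<and>
        lipschitz_field (dim N i) (sp N i) (fld N i)) \<and>
     (\<forall>i<nn N. \<forall>j<nn N. i \<noteq> j \<longrightarrow>
        (\<forall>x\<in>sp N j. syn N i j x = 0) \<or> (\<forall>x\<in>sp N j. syn N i j x > 0) \<or>
        (\<forall>x\<in>sp N j. syn N i j x < 0)) \<and>
     (\<forall>i<nn N. \<exists>j<nn N. j \<noteq> i \<and> nz N i j) \<and>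
     (\<forall>X0\<in>Mtot N. \<exists>X. solution N X0 X) \<and>
     (\<forall>X0\<in>Mtot N. \<forall>X Y. solution N X0 X \<longrightarrow> solution N X0 Y \<longrightarrow> (\<forall>t\<ge>0. X t = Y t))"

definition excitatory :: "network \<Rightarrow> nat \<Rightarrow> bool" where
  "excitatory N i \<longleftrightarrow> (\<forall>j<nn N. j \<noteq> i \<longrightarrow> nz N i j \<longrightarrow> (\<forall>x\<in>sp N j. syn N i j x > 0))"

definition inhibitory :: "network \<Rightarrow> nat \<Rightarrow> bool" where
  "inhibitory N i \<longleftrightarrow> (\<forall>j<nn N. j \<noteq> i \<longrightarrow> nz N i j \<longrightarrow> (\<forall>x\<in>sp N j. syn N i j x < 0))"

definition dale :: "network \<Rightarrow> bool" where
  "dale N \<longleftrightarrow> (\<forall>i<nn N. excitatory N i \<or> inhibitory N i)"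

definition sameF :: "network \<Rightarrow> nat \<Rightarrow> network \<Rightarrow> nat \<Rightarrow> bool" where
  "sameF N i N' i' \<longleftrightarrow> dim N i = dim N' i' \<and> sp N i = sp N' i' \<and> thr N i = thr N' i' \<and>
     (\<forall>x\<in>sp N i. \<forall>c<dim N i. fld N i x c = fld N' i' x c)"

definition struct_ident :: "network \<Rightarrow> nat \<Rightarrow> nat \<Rightarrow> bool" where
  "struct_ident N i j \<longleftrightarrow> i \<noteq> j \<and> i < nn N \<and> j < nn N \<and> sameF N i N j \<and>
     \<not> nz N i j \<and> \<not> nz N j i \<and>
     (\<forall>h<nn N. h \<noteq> i \<longrightarrow> h \<noteq> j \<longrightarrow> (\<forall>x\<in>sp N i. syn N h i x = syn N h j x))"

definition homog_part :: "network \<Rightarrow> nat set \<Rightarrow> bool" where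
  "homog_part N A \<longleftrightarrow> A \<noteq> {} \<and> A \<subseteq> neurons N \<and>
     (\<forall>i\<in>A. \<forall>j\<in>A. i \<noteq> j \<longrightarrow> struct_ident N i j) \<and>
     (\<forall>B. A \<subseteq> B \<longrightarrow> B \<subseteq> neurons N \<longrightarrow> (\<forall>i\<in>B. \<forall>j\<in>B. i \<noteq> j \<longrightarrow> struct_ident N i j) \<longrightarrow> B = A)"

definition parts :: "network \<Rightarrow> nat set set" where
  "parts N = {A. homog_part N A}"

definition unit_partition :: "network \<Rightarrow> nat set \<Rightarrow> nat set set \<Rightarrow> bool" where
  "unit_partition N A P \<longleftrightarrow> \<Union>P = A \<and> {} \<notin> P \<and>
     (\<forall>U\<in>P. \<forall>V\<in>P. U \<noteq> V \<longrightarrow> U \<inter> V = {}) \<and>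
     (\<forall>U\<in>P. \<forall>h\<in>neurons N - A. card {i\<in>U. nz N i h} \<le> 1)"

definition min_unit_partition :: "network \<Rightarrow> nat set \<Rightarrow> nat set set \<Rightarrow> bool" where
  "min_unit_partition N A P \<longleftrightarrow> unit_partition N A P \<and>
     (\<forall>Q. unit_partition N A Q \<longrightarrow> card P \<le> card Q)"

definition unit_choice :: "network \<Rightarrow> (nat set \<Rightarrow> nat set set) \<Rightarrow> bool" where
  "unit_choice N UP \<longleftrightarrow> (\<forall>A\<in>parts N. min_unit_partition N A (UP A))"

definition units :: "network \<Rightarrow> (nat set \<Rightarrow> nat set set) \<Rightarrow> nat set set" where
  "units N UP = (\<Union>A\<in>parts N. UP A)"

definition unit_delta :: "network \<Rightarrow> nat set \<Rightarrow> nat set \<Rightarrow> (nat \<Rightarrow> real) \<Rightarrow> real" where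
  "unit_delta N U B =
     (if \<exists>i\<in>U. \<exists>h\<in>B. nz N i h then
        (let i = (SOME i. i \<in> U \<and> (\<exists>h\<in>B. nz N i h));
             h = (SOME h. h \<in> B \<and> nz N i h) in syn N i h)
      else (\<lambda>_. 0))"

definition syn_equiv :: "network \<Rightarrow> network \<Rightarrow> bool" where
  "syn_equiv N N' \<longleftrightarrow> (\<exists>UP UP' \<phi> \<phi>B.
     unit_choice N UP \<and> unit_choice N' UP' \<and>
     card (parts N) = card (parts N') \<and> card (units N UP) = card (units N' UP') \<and>
     bij_betw \<phi> (units N UP) (units N' UP') \<and>
     bij_betw \<phi>B (parts N) (parts N') \<and>
     (\<forall>B\<in>parts N. \<phi> ` UP B = UP' (\<phi>B B)) \<and>
     (\<forall>U\<in>units N UP. \<forall>B\<in>parts N. \<forall>h\<in>B. \<forall>x\<in>sp N h.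
        unit_delta N U B x = unit_delta N' (\<phi> U) (\<phi>B B) x) \<and>
     (\<forall>U\<in>units N UP. \<forall>i\<in>U. \<forall>i'\<in>\<phi> U. sameF N i N' i'))"

text \<open>embeds N' N  means  N' \<sqsubseteq> N.\<close>
definition embeds :: "network \<Rightarrow> network \<Rightarrow> bool" where
  "embeds N' N \<longleftrightarrow> (\<exists>\<psi>. continuous_on (Mtot N') \<psi> \<and> inj_on \<psi> (Mtot N') \<and>
     \<psi> ` Mtot N' \<subseteq> Mtot N \<and>
     (\<forall>X0\<in>Mtot N'. \<forall>t\<ge>0. \<psi> (dyn N' X0 t) = dyn N (\<psi> X0) t))"

definition dynamical_optimum :: "network \<Rightarrow> bool" where
  "dynamical_optimum N \<longleftrightarrow> (\<forall>N'. admissible N' \<longrightarrow> syn_equiv N N' \<longrightarrow> embeds N' N)"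

end

theory Submission
  imports Defs
begin

text \<open>Take the star network with excitatory centre 0 and leaves 1, 2, and split the centre into
  two structurally identical neurons 0 and 3, each keeping one of the two outgoing synapses.
  Since every leaf receives from only one copy, the copies form a single synaptical unit, so the
  split network is synaptically equivalent to the star. With one-dimensional states in \<open>[0, 1]\<close>,
  zero vector fields and thresholds above 1 no neuron ever fires, so both dynamics are
  constant. An embedding of the split network into the star would then just be a continuous
  injection of a 4-cube into a 3-cube, which invariance of domain rules out.\<close>

definition potential_state :: "real \<Rightarrow> nat \<Rightarrow> real" where
  "potential_state r = (\<lambda>c. if c = 0 then r else 0)"

definition unit_segment :: "(nat \<Rightarrow> real) set" where
  "unit_segment = {y. (\<forall>c\<ge>1. y c = 0) \<and> 0 \<le> y 0 \<and> y 0 \<le> 1}"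

lemma continuous_on_apply: "continuous_on S (\<lambda>x::'a \<Rightarrow> 'b::topological_space. x i)"
  by (rule continuous_on_subset[OF continuous_on_product_coordinates]) simp

lemma continuous_on_apply2: "continuous_on S (\<lambda>x::'a \<Rightarrow> 'b \<Rightarrow> 'c::topological_space. x i j)"
  using continuous_on_product_then_coordinatewise[OF continuous_on_apply[of S i]] by simp

lemma continuous_on_potential_state: "continuous_on S potential_state"
  unfolding potential_state_def
  by (intro continuous_on_coordinatewise_then_product, case_tac "i = 0") auto

lemma unit_segment_eq_image: "unit_segment = potential_state ` {0..1}"
proof
  show "unit_segment \<subseteq> potential_state ` {0..1}"
  proof
    fix y assume y: "y \<in> unit_segment"
    then have "y = potential_state (y 0)"
      by (auto simp: unit_segment_def potential_state_def fun_eq_iff)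
    with y show "y \<in> potential_state ` {0..1}" by (auto simp: unit_segment_def)
  qed
qed (auto simp: unit_segment_def potential_state_def)

lemma compact_unit_segment: "compact unit_segment"
  unfolding unit_segment_eq_image
  by (intro compact_continuous_image continuous_on_potential_state compact_Icc)

lemma unit_segment_nonempty: "unit_segment \<noteq> {}"
  unfolding unit_segment_eq_image by auto

lemma unit_segment_eqI:
  assumes "x \<in> unit_segment" "y \<in> unit_segment" "x 0 = y 0"
  shows "x = y"
proof
  fix c show "x c = y c" using assms by (cases "c = 0") (auto simp: unit_segment_def)
qed

definition reflect_potential :: "(nat \<Rightarrow> real) \<Rightarrow> (nat \<Rightarrow> real)" where
  "reflect_potential y = y(0 := 1 - y 0)"

lemma reflect_potential_involution [simp]: "reflect_potential (reflect_potential y) = y"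
  by (auto simp: reflect_potential_def fun_eq_iff)

lemma continuous_on_reflect_potential: "continuous_on S reflect_potential"
  unfolding reflect_potential_def
  by (intro continuous_on_coordinatewise_then_product, case_tac "i = 0")
     (auto intro!: continuous_intros continuous_on_apply)

lemma open_potential_less: "open {y::nat \<Rightarrow> real. y 0 < a}"
  and open_potential_greater: "open {y::nat \<Rightarrow> real. a < y 0}"
  by (auto intro!: open_Collect_less continuous_intros continuous_on_apply)

text \<open>Near potential 0 the segment is a chart of the half line; near potential 1 it is mapped
  onto such a chart by the reflection \<open>r \<mapsto> 1 - r\<close>.\<close>

lemma is_manifold_unit_segment: "is_manifold 1 unit_segment"
  unfolding is_manifold_def
proof (intro conjI ballI)
  show "unit_segment \<subseteq> Rk 1" by (auto simp: unit_segment_def Rk_def)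
  fix x assume x: "x \<in> unit_segment"
  define U where "U = unit_segment \<inter> {y. y 0 < 1}"
  define V where "V = unit_segment \<inter> {y. 0 < y 0}"
  have U_open: "openin (top_of_set unit_segment) U"
    unfolding U_def using open_potential_less by (auto simp: openin_open_Int)
  have V_open: "openin (top_of_set unit_segment) V"
    unfolding V_def using open_potential_greater by (auto simp: openin_open_Int)
  have "U = halfspace 1 \<inter> {y. y 0 < 1}"
    by (auto simp: U_def unit_segment_def halfspace_def Rk_def)
  then have U_chart: "openin (top_of_set (halfspace 1)) U"
    using open_potential_less by (auto simp: openin_open_Int)
  have "reflect_potential ` V \<subseteq> U" "reflect_potential ` U \<subseteq> V"
    by (auto simp: U_def V_def unit_segment_def reflect_potential_def)
  then have "homeomorphism V U reflect_potential reflect_potential"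
    by (intro homeomorphismI continuous_on_reflect_potential) simp_all
  then have "V homeomorphic U" unfolding homeomorphic_def by blast
  show "\<exists>U V. openin (top_of_set unit_segment) U \<and> x \<in> U \<and>
      openin (top_of_set (halfspace 1)) V \<and> U homeomorphic V"
  proof (cases "x 0 < 1")
    case True
    with x U_open U_chart show ?thesis by (auto simp: U_def intro!: homeomorphic_refl)
  next
    case False
    with x have "x \<in> V" by (auto simp: V_def unit_segment_def)
    with V_open U_chart \<open>V homeomorphic U\<close> show ?thesis by blast
  qed
qed


subsection \<open>Functions with vanishing right derivative\<close>

lemma right_deriv_zero_bound:
  fixes g :: "real \<Rightarrow> real"
  assumes "a \<le> b" and cont: "continuous_on {a..b} g"
    and deriv: "\<And>t. t \<in> {a..<b} \<Longrightarrow> (g has_real_derivative 0) (at t within {t..})"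
    and "e > 0"
  shows "\<bar>g b - g a\<bar> \<le> e * (b - a)"
proof -
  define S where "S = {t \<in> {a..b}. \<bar>g t - g a\<bar> \<le> e * (t - a)}"
  have "closed S" unfolding S_def
    by (intro continuous_on_closed_Collect_le continuous_intros cont)
  moreover have "a \<in> S" using \<open>a \<le> b\<close> by (auto simp: S_def)
  moreover have bdd: "bdd_above S" by (auto simp: S_def bdd_above_def)
  ultimately have "Sup S \<in> S" using closed_contains_Sup by blast
  define c where "c = Sup S"
  have c: "c \<in> S" using \<open>Sup S \<in> S\<close> by (simp add: c_def)
  show ?thesis
  proof (cases "c = b")
    case True then show ?thesis using c by (auto simp: S_def)
  next
    case False
    with c have "a \<le> c" "c < b" by (auto simp: S_def)
    txt \<open>The right derivative at \<open>c\<close> lets the estimate propagate beyond \<open>c = Sup S\<close>.\<close>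
    have "((\<lambda>y. (g y - g c) / (y - c)) \<longlongrightarrow> 0) (at c within {c..})"
      using deriv[of c] \<open>a \<le> c\<close> \<open>c < b\<close> by (simp add: has_field_derivative_iff)
    then have "\<forall>\<^sub>F y in at c within {c..}. dist ((g y - g c) / (y - c)) 0 < e"
      using \<open>e > 0\<close> tendstoD by blast
    then obtain d where "d > 0" and d: "\<And>y. y \<in> {c..} \<Longrightarrow> y \<noteq> c \<Longrightarrow> dist y c < d \<Longrightarrow>
        dist ((g y - g c) / (y - c)) 0 < e"
      unfolding eventually_at by blast
    define y where "y = min (c + d/2) b"
    have "c < y" "y \<le> b" "dist y c < d" using \<open>d > 0\<close> \<open>c < b\<close> by (auto simp: y_def dist_real_def)
    then have "\<bar>(g y - g c) / (y - c)\<bar> < e" using d[of y] by auto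
    then have "\<bar>g y - g c\<bar> < e * (y - c)" using \<open>c < y\<close> by (simp add: abs_divide divide_less_eq)
    moreover have "\<bar>g c - g a\<bar> \<le> e * (c - a)" using c by (auto simp: S_def)
    ultimately have "y \<in> S" using \<open>y \<le> b\<close> \<open>c < y\<close> \<open>a \<le> c\<close> by (auto simp: S_def algebra_simps)
    then have "y \<le> c" unfolding c_def using bdd by (rule cSup_upper)
    with \<open>c < y\<close> show ?thesis by simp
  qed
qed

lemma right_deriv_zero_imp_const:
  fixes g :: "real \<Rightarrow> real"
  assumes "a \<le> b" and "continuous_on {a..b} g"
    and "\<And>t. t \<in> {a..<b} \<Longrightarrow> (g has_real_derivative 0) (at t within {t..})"
  shows "g b = g a"
proof (cases "a = b")
  case False
  with \<open>a \<le> b\<close> have "b - a > 0" by simp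
  have "\<bar>g b - g a\<bar> \<le> 0 + e" if "e > 0" for e
    using right_deriv_zero_bound[OF assms, of "e / (b - a)"] that \<open>b - a > 0\<close> by simp
  then have "\<bar>g b - g a\<bar> \<le> 0" by (rule field_le_epsilon)
  then show ?thesis by simp
qed simp

subsection \<open>Networks with constant dynamics\<close>

text \<open>With thresholds above 1 the potentials, which stay in \<open>[0, 1]\<close>, never reach threshold,
  so every state is an equilibrium.\<close>

definition static_network :: "nat \<Rightarrow> (nat \<Rightarrow> nat \<Rightarrow> bool) \<Rightarrow> (nat \<Rightarrow> real) \<Rightarrow> network" where
  "static_network n E T = \<lparr>nn = n, dim = (\<lambda>_. 1), sp = (\<lambda>_. unit_segment), thr = T,
      fld = (\<lambda>_ _ _. 0), syn = (\<lambda>i j x. if E i j then 1 else 0)\<rparr>"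

lemma static_network_simps [simp]:
  "nn (static_network n E T) = n" "dim (static_network n E T) i = 1"
  "sp (static_network n E T) i = unit_segment" "thr (static_network n E T) i = T i"
  "fld (static_network n E T) i x c = 0"
  "syn (static_network n E T) i j x = (if E i j then 1 else 0)"
  by (simp_all add: static_network_def)

lemma nz_static_network [simp]: "nz (static_network n E T) i j \<longleftrightarrow> E i j"
  using unit_segment_nonempty by (auto simp: nz_def)

lemma sameF_static_network [simp]:
  "sameF (static_network n E T) i (static_network n' E' T') i' \<longleftrightarrow> T i = T' i'"
  by (simp add: sameF_def)

lemma unit_delta_static_network:
  "unit_delta (static_network n E T) U B = (\<lambda>_. if \<exists>i\<in>U. \<exists>h\<in>B. E i h then 1 else 0)"
proof (cases "\<exists>i\<in>U. \<exists>h\<in>B. E i h")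
  case True
  define i where "i = (SOME i. i \<in> U \<and> (\<exists>h\<in>B. E i h))"
  have i: "i \<in> U \<and> (\<exists>h\<in>B. E i h)" unfolding i_def by (rule someI_ex) (use True in blast)
  define h where "h = (SOME h. h \<in> B \<and> E i h)"
  have "h \<in> B \<and> E i h" unfolding h_def by (rule someI_ex) (use i in blast)
  with True show ?thesis by (simp add: unit_delta_def Let_def fun_eq_iff flip: i_def h_def)
qed (auto simp: unit_delta_def)

lemma static_network_potential_le_1:
  "X \<in> Mtot (static_network n E T) \<Longrightarrow> j < n \<Longrightarrow> X j 0 \<le> 1"
  by (auto simp: Mtot_def unit_segment_def)

lemma static_network_states_eqI:
  assumes "X \<in> Mtot (static_network n E T)" "Y \<in> Mtot (static_network n E T)"
    and "\<And>j. j < n \<Longrightarrow> X j 0 = Y j 0"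
  shows "X = Y"
proof
  fix j show "X j = Y j"
    using assms unit_segment_eqI[of "X j" "Y j"] by (cases "j < n") (auto simp: Mtot_def)
qed

lemma jump_static_network:
  assumes "\<And>j. j < n \<Longrightarrow> Y j 0 < T j"
  shows "jump (static_network n E T) Y = Y"
proof -
  have "(aval_step (static_network n E T) Y ^^ k) {} = {}" for k
    by (induction k) (use assms in \<open>auto simp: aval_step_def not_le\<close>)
  then have "spikers (static_network n E T) Y = {}" by (simp add: spikers_def)
  then show ?thesis by (auto simp: jump_def fun_eq_iff)
qed

lemma jump_static_network_bounded:
  assumes "\<And>i. T i > 1" and "\<And>j. j < n \<Longrightarrow> Y j 0 \<le> 1"
  shows "jump (static_network n E T) Y = Y"
  using assms by (intro jump_static_network) (meson le_less_trans)

lemma jump_static_network_state: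
  assumes T: "\<And>i. T i > 1" and X: "X \<in> Mtot (static_network n E T)"
  shows "jump (static_network n E T) X = X"
  by (rule jump_static_network_bounded[OF T]) (use static_network_potential_le_1[OF X] in blast)

lemma static_solution_left_continuous:
  assumes T: "\<And>i. T i > 1" and sol: "solution (static_network n E T) X0 X" and "u > 0"
  shows "((\<lambda>s. X s j c) \<longlongrightarrow> X u j c) (at_left u)"
proof -
  obtain Y where lim: "(X \<longlongrightarrow> Y) (at_left u)" and Xu: "X u = jump (static_network n E T) Y"
    using sol \<open>u > 0\<close> by (auto simp: solution_def)
  have coord: "((\<lambda>s. X s k c) \<longlongrightarrow> Y k c) (at_left u)" for k c
    by (rule continuous_on_tendsto_compose[OF continuous_on_apply2[of UNIV k c] lim]) auto
  have "Y k 0 \<le> 1" if "k < n" for k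
  proof (rule tendsto_upperbound[OF coord])
    have "\<forall>\<^sub>F s in at_left u. s > 0"
      using eventually_at_left_real[of 0 u] \<open>u > 0\<close> by (auto elim: eventually_mono)
    then show "\<forall>\<^sub>F s in at_left u. X s k 0 \<le> 1"
    proof eventually_elim
      case (elim s)
      with sol have "X s \<in> Mtot (static_network n E T)" by (simp add: solution_def)
      then show ?case using static_network_potential_le_1[OF _ \<open>k < n\<close>] by simp
    qed
  qed simp
  then have "jump (static_network n E T) Y = Y" by (rule jump_static_network_bounded[OF T])
  with Xu coord show ?thesis by simp
qed

lemma static_solution_potential_continuous:
  assumes T: "\<And>i. T i > 1" and sol: "solution (static_network n E T) X0 X" and "j < n"
  shows "continuous_on {0..t} (\<lambda>s. X s j 0)"
proof (rule continuous_on_eq_continuous_within[THEN iffD2], rule ballI)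
  let ?g = "\<lambda>s. X s j 0"
  fix x assume x: "x \<in> {0..t}"
  have right: "continuous (at x within {x..}) ?g"
    by (rule DERIV_continuous[where D = 0]) (use sol x \<open>j < n\<close> in \<open>simp add: solution_def\<close>)
  show "continuous (at x within {0..t}) ?g"
  proof (cases "x = 0")
    case True then show ?thesis using right by (auto intro: continuous_within_subset)
  next
    case False
    with x have "x > 0" by simp
    have "(?g \<longlongrightarrow> ?g x) (at_right x)"
      using right unfolding continuous_within by (rule tendsto_within_subset) auto
    with static_solution_left_continuous[OF T sol \<open>x > 0\<close>] have "continuous (at x) ?g"
      by (simp add: continuous_def filterlim_at_split)
    then show ?thesis by (rule continuous_at_imp_continuous_within)
  qed
qed

lemma static_solution_const:
  assumes T: "\<And>i. T i > 1" and sol: "solution (static_network n E T) X0 X"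
    and X0: "X0 \<in> Mtot (static_network n E T)" and "t \<ge> 0"
  shows "X t = X0"
proof (rule static_network_states_eqI)
  show "X t \<in> Mtot (static_network n E T)" using sol \<open>t \<ge> 0\<close> by (simp add: solution_def)
  show "X0 \<in> Mtot (static_network n E T)" by (rule X0)
  fix j assume "j < n"
  have "X 0 = X0"
    using sol jump_static_network_state[OF T X0] by (simp add: solution_def)
  moreover have "X t j 0 = X 0 j 0"
  proof (rule right_deriv_zero_imp_const[where g = "\<lambda>s. X s j 0"])
    show "continuous_on {0..t} (\<lambda>s. X s j 0)"
      by (rule static_solution_potential_continuous[OF T sol \<open>j < n\<close>])
    show "((\<lambda>s. X s j 0) has_real_derivative 0) (at s within {s..})" if "s \<in> {0..<t}" for s
      using sol \<open>j < n\<close> that by (simp add: solution_def)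
  qed (rule \<open>t \<ge> 0\<close>)
  ultimately show "X t j 0 = X0 j 0" by simp
qed

lemma admissible_static_network:
  assumes "n \<ge> 2" and T: "\<And>i. T i > 1" and E: "\<And>i. i < n \<Longrightarrow> \<exists>j<n. j \<noteq> i \<and> E i j"
  shows "admissible (static_network n E T)"
  unfolding admissible_def
proof (intro conjI allI impI ballI)
  fix X0 assume X0: "X0 \<in> Mtot (static_network n E T)"
  have jump: "jump (static_network n E T) X0 = X0" by (rule jump_static_network_state[OF T X0])
  show "\<exists>X. solution (static_network n E T) X0 X"
    by (rule exI[of _ "\<lambda>_. X0"]) (auto simp: solution_def X0 jump intro!: exI[of _ X0])
  fix X Y and t :: real
  assume "solution (static_network n E T) X0 X" "solution (static_network n E T) X0 Y" "t \<ge> 0"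
  then show "X t = Y t" using static_solution_const[OF T _ X0] by metis
next
  fix i
  show "lipschitz_field (dim (static_network n E T) i) (sp (static_network n E T) i)
      (fld (static_network n E T) i)"
    by (auto simp: lipschitz_field_def edist_def intro!: exI[of _ 0])
  show "0 < thr (static_network n E T) i" using T[of i] by simp
qed (use assms compact_unit_segment is_manifold_unit_segment unit_segment_nonempty in simp_all)

lemma parts_eq_singletons:
  assumes "\<And>i j. \<not> struct_ident N i j"
  shows "parts N = (\<lambda>i. {i}) ` neurons N"
proof -
  have "homog_part N A \<longleftrightarrow> (\<exists>i\<in>neurons N. A = {i})" for A
  proof
    assume "homog_part N A"
    then have "A \<noteq> {}" "A \<subseteq> neurons N" "\<And>i j. i \<in> A \<Longrightarrow> j \<in> A \<Longrightarrow> i = j"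
      using assms by (auto simp: homog_part_def)
    then show "\<exists>i\<in>neurons N. A = {i}" by blast
  qed (use assms in \<open>auto simp: homog_part_def\<close>)
  then show ?thesis by (auto simp: parts_def)
qed

lemma parts_eq_one_pair:
  assumes "a \<noteq> b" "a \<in> neurons N" "b \<in> neurons N"
    and si: "\<And>i j. struct_ident N i j \<longleftrightarrow> {i, j} = {a, b}"
  shows "parts N = insert {a, b} ((\<lambda>i. {i}) ` (neurons N - {a, b}))"
proof -
  define clique where "clique B \<longleftrightarrow> (\<forall>i\<in>B. \<forall>j\<in>B. i \<noteq> j \<longrightarrow> struct_ident N i j)" for B
  have cliques: "B \<subseteq> {a, b} \<or> (\<exists>k. k \<notin> {a, b} \<and> B = {k})" if "clique B" for B
  proof (cases "B \<subseteq> {a, b}")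
    case False
    then obtain k where k: "k \<in> B" "k \<notin> {a, b}" by blast
    have "j = k" if "j \<in> B" for j
      using \<open>clique B\<close> that k si[of j k] by (auto simp: clique_def doubleton_eq_iff)
    with k show ?thesis by blast
  qed simp
  have pair: "clique {a, b}" using si by (auto simp: clique_def insert_commute)
  have homog: "homog_part N A \<longleftrightarrow>
      A \<noteq> {} \<and> A \<subseteq> neurons N \<and> clique A \<and> (\<forall>B. A \<subseteq> B \<longrightarrow> B \<subseteq> neurons N \<longrightarrow> clique B \<longrightarrow> B = A)"
    for A by (simp add: homog_part_def clique_def)
  have "homog_part N A \<longleftrightarrow> A = {a, b} \<or> (\<exists>k\<in>neurons N - {a, b}. A = {k})" for A
  proof
    assume A: "homog_part N A"
    then have "A \<subseteq> {a, b} \<or> (\<exists>k. k \<notin> {a, b} \<and> A = {k})" using cliques homog by blast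
    moreover have "A = {a, b}" if "A \<subseteq> {a, b}"
      using A that pair assms(2,3) homog by blast
    ultimately show "A = {a, b} \<or> (\<exists>k\<in>neurons N - {a, b}. A = {k})" using A homog by blast
  next
    assume "A = {a, b} \<or> (\<exists>k\<in>neurons N - {a, b}. A = {k})"
    then show "homog_part N A" unfolding homog
      using cliques pair assms(1-3) by (auto simp: clique_def)
  qed
  then show ?thesis by (auto simp: parts_def)
qed

lemma unit_choice_whole_parts:
  assumes "\<And>A h i j. A \<in> parts N \<Longrightarrow> h \<in> neurons N - A \<Longrightarrow> i \<in> A \<Longrightarrow> j \<in> A \<Longrightarrow>
    nz N i h \<Longrightarrow> nz N j h \<Longrightarrow> i = j"
  shows "unit_choice N (\<lambda>A. {A})"
  unfolding unit_choice_def min_unit_partition_def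
proof (intro ballI conjI allI impI)
  fix A assume A: "A \<in> parts N"
  then have "A \<noteq> {}" "finite A"
    by (auto simp: parts_def homog_part_def neurons_def finite_subset)
  with A assms show "unit_partition N A {A}"
    by (auto simp: unit_partition_def card_le_Suc0_iff_eq)
  fix Q assume "unit_partition N A Q"
  then have "\<Union>Q = A" by (simp add: unit_partition_def)
  with \<open>finite A\<close> \<open>A \<noteq> {}\<close> have "finite Q" "Q \<noteq> {}"
    by (auto intro: finite_UnionD)
  then show "card {A} \<le> card Q" by (simp add: Suc_leI card_gt_0_iff)
qed

lemma units_whole_parts: "units N (\<lambda>A. {A}) = parts N"
  by (auto simp: units_def)

subsection \<open>The star network and its split\<close>

text \<open>In both networks neuron 2 gets a larger threshold than neuron 1, so that these two are
  never structurally identical.\<close>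

definition star_thresholds :: "nat \<Rightarrow> real" where
  "star_thresholds i = (if i = 2 then 3 else 2)"

definition star_edges :: "nat \<Rightarrow> nat \<Rightarrow> bool" where
  "star_edges i j \<longleftrightarrow> (i = 0 \<and> (j = 1 \<or> j = 2)) \<or> ((i = 1 \<or> i = 2) \<and> j = 0)"

text \<open>Each leaf receives from only one of the copies 0 and 3 of the centre, so \<open>{0, 3}\<close> is a
  single synaptical unit.\<close>

definition split_star_edges :: "nat \<Rightarrow> nat \<Rightarrow> bool" where
  "split_star_edges i j \<longleftrightarrow>
     (i = 0 \<and> j = 1) \<or> (i = 3 \<and> j = 2) \<or> ((i = 1 \<or> i = 2) \<and> (j = 0 \<or> j = 3))"

definition star_network :: network where
  "star_network = static_network 3 star_edges star_thresholds"

definition split_star_network :: network where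
  "split_star_network = static_network 4 split_star_edges star_thresholds"

lemma less_3_cases: "(i::nat) < 3 \<longleftrightarrow> i = 0 \<or> i = 1 \<or> i = 2" by auto
lemma less_4_cases: "(i::nat) < 4 \<longleftrightarrow> i = 0 \<or> i = 1 \<or> i = 2 \<or> i = 3" by auto

lemma admissible_star_network: "admissible star_network"
  unfolding star_network_def
proof (rule admissible_static_network)
  fix i :: nat assume "i < 3"
  then show "\<exists>j<3. j \<noteq> i \<and> star_edges i j"
    by (intro exI[of _ "if i = 0 then 1 else 0"]) (auto simp: star_edges_def less_3_cases)
qed (simp_all add: star_thresholds_def)

lemma admissible_split_star_network: "admissible split_star_network"
  unfolding split_star_network_def
proof (rule admissible_static_network)
  fix i :: nat assume "i < 4"
  then show "\<exists>j<4. j \<noteq> i \<and> split_star_edges i j"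
    by (intro exI[of _ "if i = 0 then 1 else if i = 3 then 2 else 0"])
       (auto simp: split_star_edges_def less_4_cases)
qed (simp_all add: star_thresholds_def)

lemma dale_star_network: "dale star_network"
  by (simp add: dale_def excitatory_def star_network_def)

lemma parts_star_network: "parts star_network = {{0}, {1}, {2}}"
proof -
  have "\<not> struct_ident star_network i j" for i j
    by (auto simp: struct_ident_def star_network_def star_edges_def star_thresholds_def less_3_cases)
  moreover have "neurons star_network = {0, 1, 2}"
    by (auto simp: neurons_def star_network_def)
  ultimately show ?thesis by (simp add: parts_eq_singletons)
qed

lemma parts_split_star_network: "parts split_star_network = {{0, 3}, {1}, {2}}"
proof -
  have "struct_ident split_star_network i j \<longleftrightarrow> (i = 0 \<and> j = 3) \<or> (i = 3 \<and> j = 0)" for i j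
    by (auto simp: struct_ident_def split_star_network_def split_star_edges_def
        star_thresholds_def less_4_cases)
  then have "parts split_star_network =
      insert {0, 3} ((\<lambda>i. {i}) ` (neurons split_star_network - {0, 3}))"
    by (intro parts_eq_one_pair) (auto simp: neurons_def split_star_network_def doubleton_eq_iff)
  moreover have "neurons split_star_network - {0, 3} = {1, 2}"
    by (auto simp: neurons_def split_star_network_def)
  ultimately show ?thesis by auto
qed

lemma unit_choice_star_network: "unit_choice star_network (\<lambda>A. {A})"
  by (rule unit_choice_whole_parts) (auto simp: parts_star_network)

lemma unit_choice_split_star_network: "unit_choice split_star_network (\<lambda>A. {A})"
  by (rule unit_choice_whole_parts, unfold parts_split_star_network)
     (auto simp: split_star_network_def split_star_edges_def)

definition merge_centre :: "nat set \<Rightarrow> nat set" where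
  "merge_centre U = (if U = {0} then {0, 3} else U)"

lemma syn_equiv_star_split_star: "syn_equiv star_network split_star_network"
  unfolding syn_equiv_def
proof (intro exI conjI)
  show "unit_choice star_network (\<lambda>A. {A})" by (rule unit_choice_star_network)
  show "unit_choice split_star_network (\<lambda>A. {A})" by (rule unit_choice_split_star_network)
  show "bij_betw merge_centre (parts star_network) (parts split_star_network)"
    by (simp add: parts_star_network parts_split_star_network bij_betw_def merge_centre_def
        insert_commute)
  then show "bij_betw merge_centre (units star_network (\<lambda>A. {A}))
      (units split_star_network (\<lambda>A. {A}))"
    by (simp add: units_whole_parts)
  show "card (parts star_network) = card (parts split_star_network)"
    by (simp add: parts_star_network parts_split_star_network)
  then show "card (units star_network (\<lambda>A. {A})) = card (units split_star_network (\<lambda>A. {A}))"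
    by (simp add: units_whole_parts)
  show "\<forall>B\<in>parts star_network. merge_centre ` {B} = {merge_centre B}" by simp
  show "\<forall>U\<in>units star_network (\<lambda>A. {A}). \<forall>B\<in>parts star_network. \<forall>h\<in>B.
      \<forall>x\<in>sp star_network h.
      unit_delta star_network U B x = unit_delta split_star_network (merge_centre U) (merge_centre B) x"
    unfolding units_whole_parts parts_star_network
    by (simp add: star_network_def split_star_network_def unit_delta_static_network
        merge_centre_def star_edges_def split_star_edges_def)
  show "\<forall>U\<in>units star_network (\<lambda>A. {A}). \<forall>i\<in>U. \<forall>i'\<in>merge_centre U.
      sameF star_network i split_star_network i'"
    unfolding units_whole_parts parts_star_network
    by (simp add: star_network_def split_star_network_def merge_centre_def star_thresholds_def)
qed

subsection \<open>No continuous injection of the split phase space\<close>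

lemma continuous_injective_image_not_in_hyperplane:
  fixes f :: "'a::euclidean_space \<Rightarrow> 'a"
  assumes "continuous_on S f" "inj_on f S" "open S" "S \<noteq> {}" "b \<noteq> 0"
  shows "\<not> f ` S \<subseteq> {x. b \<bullet> x = 0}"
proof
  assume plane: "f ` S \<subseteq> {x. b \<bullet> x = 0}"
  from \<open>S \<noteq> {}\<close> obtain q where q: "q \<in> f ` S" by blast
  have "open (f ` S)" by (rule invariance_of_domain[OF assms(1,3,2)])
  with q obtain e where "e > 0" and e: "ball q e \<subseteq> f ` S" using open_contains_ball by blast
  define q' where "q' = q + (e / (2 * norm b)) *\<^sub>R b"
  have "dist q q' < e" using \<open>e > 0\<close> \<open>b \<noteq> 0\<close> by (simp add: q'_def dist_norm)
  then have "q' \<in> ball q e" by simp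
  with e plane have "b \<bullet> q' = 0" by blast
  moreover have "b \<bullet> q = 0" using q plane by auto
  ultimately show False
    using \<open>e > 0\<close> \<open>b \<noteq> 0\<close> by (simp add: q'_def inner_add_right power2_norm_eq_inner [symmetric])
qed

definition state_of_potentials :: "real \<times> real \<times> real \<times> real \<Rightarrow> nat \<Rightarrow> nat \<Rightarrow> real" where
  "state_of_potentials = (\<lambda>(a, b, c, d) i. potential_state
     (if i = 0 then a else if i = 1 then b else if i = 2 then c else if i = 3 then d else 0))"

definition potentials_of_state :: "(nat \<Rightarrow> nat \<Rightarrow> real) \<Rightarrow> real \<times> real \<times> real \<times> real" where
  "potentials_of_state X = (X 0 0, X 1 0, X 2 0, 0)"

lemma continuous_on_state_of_potentials: "continuous_on S state_of_potentials"
proof (intro continuous_on_coordinatewise_then_product)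
  fix i c
  show "continuous_on S (\<lambda>v. state_of_potentials v i c)"
    by (cases "c = 0"; cases "i = 0"; cases "i = 1"; cases "i = 2"; cases "i = 3")
       (simp_all add: state_of_potentials_def potential_state_def case_prod_beta continuous_intros)
qed

lemma inj_state_of_potentials: "inj state_of_potentials"
proof (rule injI)
  fix v w assume eq: "state_of_potentials v = state_of_potentials w"
  have "state_of_potentials v i 0 = state_of_potentials w i 0" for i using eq by simp
  from this[of 0] this[of 1] this[of 2] this[of 3] show "v = w"
    by (cases v rule: prod_cases4; cases w rule: prod_cases4)
       (simp add: state_of_potentials_def potential_state_def)
qed

lemma potentials_of_state_in_plane: "(0, 0, 0, 1) \<bullet> potentials_of_state X = 0"
  by (simp add: potentials_of_state_def)

lemma not_embeds_split_star_network: "\<not> embeds split_star_network star_network"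
proof
  assume "embeds split_star_network star_network"
  then obtain \<psi> where cont: "continuous_on (Mtot split_star_network) \<psi>"
    and inj: "inj_on \<psi> (Mtot split_star_network)"
    and into: "\<psi> ` Mtot split_star_network \<subseteq> Mtot star_network"
    unfolding embeds_def by blast
  define cube :: "(real \<times> real \<times> real \<times> real) set"
    where "cube = {0<..<1} \<times> {0<..<1} \<times> {0<..<1} \<times> {0<..<1}"
  define g where "g = potentials_of_state \<circ> \<psi> \<circ> state_of_potentials"
  have cube_states: "state_of_potentials ` cube \<subseteq> Mtot split_star_network"
    by (auto simp: cube_def Mtot_def split_star_network_def state_of_potentials_def
        potential_state_def unit_segment_def)
  have "continuous_on cube g" unfolding g_def
    by (intro continuous_on_compose continuous_on_subset[OF cont cube_states]
        continuous_on_state_of_potentials)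
       (auto simp: potentials_of_state_def intro!: continuous_intros continuous_on_apply2)
  moreover have "inj_on g cube"
  proof (rule inj_onI)
    fix v w assume "v \<in> cube" "w \<in> cube" "g v = g w"
    have "inj_on potentials_of_state (Mtot star_network)"
      by (rule inj_onI, rule static_network_states_eqI)
         (auto simp: star_network_def potentials_of_state_def less_3_cases)
    moreover have "\<psi> (state_of_potentials v) \<in> Mtot star_network"
      "\<psi> (state_of_potentials w) \<in> Mtot star_network"
      using into cube_states \<open>v \<in> cube\<close> \<open>w \<in> cube\<close> by auto
    ultimately have "\<psi> (state_of_potentials v) = \<psi> (state_of_potentials w)"
      using \<open>g v = g w\<close> by (auto simp: g_def dest: inj_onD)
    then have "state_of_potentials v = state_of_potentials w"
      using inj cube_states \<open>v \<in> cube\<close> \<open>w \<in> cube\<close> by (auto dest: inj_onD)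
    with inj_state_of_potentials show "v = w" by (rule injD)
  qed
  moreover have "open cube" "cube \<noteq> {}"
    by (auto simp: cube_def intro!: open_Times)
  ultimately have "\<not> g ` cube \<subseteq> {x. (0, 0, 0, 1) \<bullet> x = 0}"
    by (intro continuous_injective_image_not_in_hyperplane) (simp_all add: zero_prod_def)
  moreover have "g ` cube \<subseteq> {x. (0, 0, 0, 1) \<bullet> x = 0}"
    using potentials_of_state_in_plane by (auto simp: g_def)
  ultimately show False by blast
qed

theorem mainTheorem6:
  shows "\<exists>N. admissible N \<and> dale N \<and> \<not> dynamical_optimum N"
proof (intro exI conjI)
  show "admissible star_network" by (rule admissible_star_network)
  show "dale star_network" by (rule dale_star_network)
  show "\<not> dynamical_optimum star_network"
    unfolding dynamical_optimum_def
    using admissible_split_star_network syn_equiv_star_split_star not_embeds_split_star_network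
    by blast
qed

end
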